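(* Let $S$ and $T$ be $*$-regular semigroups, regarded as DRC-semigroups via $D(a)=aa^\dagger$, $R(a)=a^\dagger a$. If $\phi:S\to T$ is a DRC-morphism (a semigroup homomorphism with $D(a)\phi=D(a\phi)$ and $R(a)\phi=R(a\phi)$ for all $a$), then $(a^\dagger)\phi=(a\phi)^\dagger$ for all $a\in S$.
   Context: A $*$-regular semigroup is a semigroup $S$ with an involution $a\mapsto a^*$ ($a^{**}=a$, $(ab)^*=b^*a^*$) such that each $a\in S$ has a (unique) element $a^\dagger$ (the Moore–Penrose inverse) with $aa^\dagger a=a$, $a^\dagger aa^\dagger=a^\dagger$, $(aa^\dagger)^*=aa^\dagger$, $(a^\dagger a)^*=a^\dagger a$. With $D(a)=aa^\dagger$ and $R(a)=a^\dagger a$, it is a DRC-semigroup (an algebra $(S,\cdot,D,R)$ satisfying $D(a)a=a$, $aR(a)=a$, $D(ab)=D(aD(b))$, $R(ab)=R(R(a)b)$, $D(ab)=D(a)D(ab)D(a)$, $R(ab)=R(b)R(ab)R(b)$, $R(D(a))=D(a)$, $D(R(a))=R(a)$). *)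

theory Defs
  imports Main
begin

definition is_semigroup :: "('a \<Rightarrow> 'a \<Rightarrow> 'a) \<Rightarrow> bool" where
  "is_semigroup m \<longleftrightarrow> (\<forall>a b c. m (m a b) c = m a (m b c))"

definition is_MP_inverse :: "('a \<Rightarrow> 'a \<Rightarrow> 'a) \<Rightarrow> ('a \<Rightarrow> 'a) \<Rightarrow> 'a \<Rightarrow> 'a \<Rightarrow> bool" where
  "is_MP_inverse m st a x \<longleftrightarrow>
     m (m a x) a = a \<and> m (m x a) x = x \<and>
     st (m a x) = m a x \<and> st (m x a) = m x a"

definition star_regular_semigroup :: "('a \<Rightarrow> 'a \<Rightarrow> 'a) \<Rightarrow> ('a \<Rightarrow> 'a) \<Rightarrow> bool" where
  "star_regular_semigroup m st \<longleftrightarrow>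
     is_semigroup m \<and>
     (\<forall>a. st (st a) = a) \<and>
     (\<forall>a b. st (m a b) = m (st b) (st a)) \<and>
     (\<forall>a. \<exists>x. is_MP_inverse m st a x)"

definition mp_inv :: "('a \<Rightarrow> 'a \<Rightarrow> 'a) \<Rightarrow> ('a \<Rightarrow> 'a) \<Rightarrow> 'a \<Rightarrow> 'a" where
  "mp_inv m st a = (THE x. is_MP_inverse m st a x)"

definition opD :: "('a \<Rightarrow> 'a \<Rightarrow> 'a) \<Rightarrow> ('a \<Rightarrow> 'a) \<Rightarrow> 'a \<Rightarrow> 'a" where
  "opD m st a = m a (mp_inv m st a)"

definition opR :: "('a \<Rightarrow> 'a \<Rightarrow> 'a) \<Rightarrow> ('a \<Rightarrow> 'a) \<Rightarrow> 'a \<Rightarrow> 'a" where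
  "opR m st a = m (mp_inv m st a) a"

definition DRC_morphism ::
  "('a \<Rightarrow> 'a \<Rightarrow> 'a) \<Rightarrow> ('a \<Rightarrow> 'a) \<Rightarrow> ('a \<Rightarrow> 'a) \<Rightarrow>
   ('b \<Rightarrow> 'b \<Rightarrow> 'b) \<Rightarrow> ('b \<Rightarrow> 'b) \<Rightarrow> ('b \<Rightarrow> 'b) \<Rightarrow> ('a \<Rightarrow> 'b) \<Rightarrow> bool" where
  "DRC_morphism mS DS RS mT DT RT \<phi> \<longleftrightarrow>
     (\<forall>a b. \<phi> (mS a b) = mT (\<phi> a) (\<phi> b)) \<and>
     (\<forall>a. \<phi> (DS a) = DT (\<phi> a)) \<and>
     (\<forall>a. \<phi> (RS a) = RT (\<phi> a))"

end

theory Submission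
  imports Defs
begin

text \<open>In a semigroup with involution a Moore-Penrose inverse is unique, so it suffices
to check that \<open>\<phi> (a\<^sup>\<dagger>)\<close> is a Moore-Penrose inverse of \<open>\<phi> a\<close>. The two equations
\<open>a a\<^sup>\<dagger> a = a\<close> and \<open>a\<^sup>\<dagger> a a\<^sup>\<dagger> = a\<^sup>\<dagger>\<close> survive any homomorphism; the two symmetry
conditions survive because \<open>\<phi> (a a\<^sup>\<dagger>) = D (\<phi> a)\<close> and \<open>\<phi> (a\<^sup>\<dagger> a) = R (\<phi> a)\<close>,
which are projections of \<open>T\<close>.\<close>

locale involution_semigroup =
  fixes m :: "'a \<Rightarrow> 'a \<Rightarrow> 'a" (infixl "\<cdot>" 70) and st :: "'a \<Rightarrow> 'a"
  assumes assoc: "(a \<cdot> b) \<cdot> c = a \<cdot> (b \<cdot> c)"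
    and st_st: "st (st a) = a"
    and st_mult: "st (a \<cdot> b) = st b \<cdot> st a"
begin

lemma MP_inverse_unique:
  assumes x: "is_MP_inverse (\<cdot>) st a x" and y: "is_MP_inverse (\<cdot>) st a y"
  shows "x = y"
proof -
  from x have axa: "a \<cdot> x \<cdot> a = a" and xax: "x \<cdot> a \<cdot> x = x"
    and ax: "st (a \<cdot> x) = a \<cdot> x" and xa: "st (x \<cdot> a) = x \<cdot> a"
    by (auto simp: is_MP_inverse_def)
  from y have aya: "a \<cdot> y \<cdot> a = a" and yay: "y \<cdot> a \<cdot> y = y"
    and ay: "st (a \<cdot> y) = a \<cdot> y" and ya: "st (y \<cdot> a) = y \<cdot> a"
    by (auto simp: is_MP_inverse_def)
  have "x = x \<cdot> st (a \<cdot> x)"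
    using xax ax by (simp add: assoc)
  also have "\<dots> = x \<cdot> st x \<cdot> st (a \<cdot> y \<cdot> a)"
    using aya by (simp add: st_mult assoc)
  also have "\<dots> = x \<cdot> st (a \<cdot> x) \<cdot> st (a \<cdot> y)"
    by (simp add: st_mult assoc)
  also have "\<dots> = x \<cdot> a \<cdot> y"
    using xax ax ay by (simp add: assoc)
  finally have x_eq: "x = x \<cdot> a \<cdot> y" .
  have "y = st (y \<cdot> a) \<cdot> y"
    using yay ya by (simp add: assoc)
  also have "\<dots> = st (a \<cdot> x \<cdot> a) \<cdot> st y \<cdot> y"
    using axa by (simp add: st_mult assoc)
  also have "\<dots> = st (x \<cdot> a) \<cdot> st (y \<cdot> a) \<cdot> y"
    by (simp add: st_mult assoc)
  also have "\<dots> = x \<cdot> a \<cdot> y"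
    using yay xa ya by (simp add: assoc)
  finally show "x = y"
    using x_eq by simp
qed

end

lemma star_regular_semigroup_involution_semigroup:
  assumes "star_regular_semigroup m st"
  shows "involution_semigroup m st"
  using assms unfolding star_regular_semigroup_def is_semigroup_def
  by unfold_locales auto

lemma is_MP_inverse_mp_inv:
  assumes "star_regular_semigroup m st"
  shows "is_MP_inverse m st a (mp_inv m st a)"
proof -
  from assms obtain x where "is_MP_inverse m st a x"
    unfolding star_regular_semigroup_def by blast
  then show ?thesis
    unfolding mp_inv_def
    using involution_semigroup.MP_inverse_unique
      [OF star_regular_semigroup_involution_semigroup [OF assms]]
    by (metis theI)
qed

lemma mp_inv_eqI:
  assumes "star_regular_semigroup m st" and "is_MP_inverse m st a x"
  shows "mp_inv m st a = x"
  using involution_semigroup.MP_inverse_unique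
    [OF star_regular_semigroup_involution_semigroup [OF assms(1)]]
    is_MP_inverse_mp_inv [OF assms(1)] assms(2)
  by blast

lemma st_opD:
  assumes "star_regular_semigroup m st"
  shows "st (opD m st a) = opD m st a"
  using is_MP_inverse_mp_inv [OF assms, of a]
  by (simp add: opD_def is_MP_inverse_def)

lemma st_opR:
  assumes "star_regular_semigroup m st"
  shows "st (opR m st a) = opR m st a"
  using is_MP_inverse_mp_inv [OF assms, of a]
  by (simp add: opR_def is_MP_inverse_def)

lemma hom_is_MP_inverse:
  assumes hom: "\<And>u v. \<phi> (mS u v) = mT (\<phi> u) (\<phi> v)"
    and x: "is_MP_inverse mS stS a x"
    and ax: "stT (\<phi> (mS a x)) = \<phi> (mS a x)"
    and xa: "stT (\<phi> (mS x a)) = \<phi> (mS x a)"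
  shows "is_MP_inverse mT stT (\<phi> a) (\<phi> x)"
  using x ax xa unfolding is_MP_inverse_def
  by (metis hom)

theorem proposition9p3:
  fixes mS :: "'a \<Rightarrow> 'a \<Rightarrow> 'a" and stS :: "'a \<Rightarrow> 'a"
    and mT :: "'b \<Rightarrow> 'b \<Rightarrow> 'b" and stT :: "'b \<Rightarrow> 'b"
    and \<phi> :: "'a \<Rightarrow> 'b"
  assumes "star_regular_semigroup mS stS"
    and "star_regular_semigroup mT stT"
    and "DRC_morphism mS (opD mS stS) (opR mS stS) mT (opD mT stT) (opR mT stT) \<phi>"
  shows "\<forall>a. \<phi> (mp_inv mS stS a) = mp_inv mT stT (\<phi> a)"
proof
  fix a
  have hom: "\<And>u v. \<phi> (mS u v) = mT (\<phi> u) (\<phi> v)"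
    and D: "\<phi> (opD mS stS a) = opD mT stT (\<phi> a)"
    and R: "\<phi> (opR mS stS a) = opR mT stT (\<phi> a)"
    using assms(3) by (auto simp: DRC_morphism_def)
  have "is_MP_inverse mT stT (\<phi> a) (\<phi> (mp_inv mS stS a))"
  proof (rule hom_is_MP_inverse [where \<phi> = \<phi>, OF hom is_MP_inverse_mp_inv [OF assms(1)]])
    show "stT (\<phi> (mS a (mp_inv mS stS a))) = \<phi> (mS a (mp_inv mS stS a))"
      using D st_opD [OF assms(2)] by (simp add: opD_def)
    show "stT (\<phi> (mS (mp_inv mS stS a) a)) = \<phi> (mS (mp_inv mS stS a) a)"
      using R st_opR [OF assms(2)] by (simp add: opR_def)
  qed
  then show "\<phi> (mp_inv mS stS a) = mp_inv mT stT (\<phi> a)"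
    by (rule mp_inv_eqI [OF assms(2), symmetric])
qed

end
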